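(* Let $(V,g)$ be a four-dimensional Lorentzian vector space, $F\in\mathrm{Skew}(V)$, and $\sigma,\tau\in\mathbb{R}$. Let $\{\ell,k,e_2,e_3\}$ be a semi-null basis of $V$ such that $$F(k)=-2e_2,\qquad F(e_2)=-\ell+\tfrac{\sigma}{4}k,\qquad \langle F(\ell),F(\ell)\rangle=\tfrac{\sigma^2+\tau^2}{4}.$$ Then either the semi-null basis $\{\ell,k,e_2,e_3\}$ or the semi-null basis $\{\ell,k,e_2,-e_3\}$ (call it $\{\ell,k,e_2,e_3'\}$) satisfies $$F(\ell)=\tfrac{\sigma}{2}e_2+\tfrac{\tau}{2}e_3',\quad F(k)=-2e_2,\quad F(e_2)=-\ell+\tfrac{\sigma}{4}k,\quad F(e_3')=\tfrac{\tau}{4}k,$$ and both do whenever $\tau=0$.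
   Context: $\mathrm{Skew}(V)$ denotes the endomorphisms $F$ with $\langle e,F(e')\rangle=-\langle F(e),e'\rangle$ for all $e,e'$. A semi-null basis $\{\ell,k,e_2,e_3\}$ is a basis with $\ell,k$ null, $\langle \ell,k\rangle=-2$, $e_2,e_3$ unit spacelike, and all other inner products between distinct basis elements equal to zero. *)

theory Defs
  imports "HOL-Analysis.Analysis"
begin

definition sym_bilinear :: "('v::real_vector \<Rightarrow> 'v \<Rightarrow> real) \<Rightarrow> bool" where
  "sym_bilinear g \<longleftrightarrow> (\<forall>x y. g x y = g y x) \<and> (\<forall>y. linear (\<lambda>x. g x y))"

definition is_basis4 :: "'v::real_vector \<Rightarrow> 'v \<Rightarrow> 'v \<Rightarrow> 'v \<Rightarrow> bool" where
  "is_basis4 a b c d \<longleftrightarrow> card {a, b, c, d} = 4 \<and> independent {a, b, c, d}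
     \<and> span {a, b, c, d} = UNIV"

definition lorentzian4 :: "('v::real_vector \<Rightarrow> 'v \<Rightarrow> real) \<Rightarrow> bool" where
  "lorentzian4 g \<longleftrightarrow> sym_bilinear g \<and>
     (\<exists>e0 e1 e2 e3. is_basis4 e0 e1 e2 e3 \<and>
        g e0 e0 = -1 \<and> g e1 e1 = 1 \<and> g e2 e2 = 1 \<and> g e3 e3 = 1 \<and>
        g e0 e1 = 0 \<and> g e0 e2 = 0 \<and> g e0 e3 = 0 \<and>
        g e1 e2 = 0 \<and> g e1 e3 = 0 \<and> g e2 e3 = 0)"

definition skew :: "('v::real_vector \<Rightarrow> 'v \<Rightarrow> real) \<Rightarrow> ('v \<Rightarrow> 'v) \<Rightarrow> bool" where
  "skew g F \<longleftrightarrow> linear F \<and> (\<forall>e e'. g e (F e') = - g (F e) e')"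

definition semi_null_basis ::
  "('v::real_vector \<Rightarrow> 'v \<Rightarrow> real) \<Rightarrow> 'v \<Rightarrow> 'v \<Rightarrow> 'v \<Rightarrow> 'v \<Rightarrow> bool" where
  "semi_null_basis g l k e2 e3 \<longleftrightarrow> is_basis4 l k e2 e3 \<and>
     g l l = 0 \<and> g k k = 0 \<and> g l k = -2 \<and> g e2 e2 = 1 \<and> g e3 e3 = 1 \<and>
     g l e2 = 0 \<and> g l e3 = 0 \<and> g k e2 = 0 \<and> g k e3 = 0 \<and> g e2 e3 = 0"

definition normal_form ::
  "('v::real_vector \<Rightarrow> 'v \<Rightarrow> real) \<Rightarrow> ('v \<Rightarrow> 'v) \<Rightarrow> real \<Rightarrow> real \<Rightarrow> 'v \<Rightarrow> 'v \<Rightarrow> 'v \<Rightarrow> 'v \<Rightarrow> bool" where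
  "normal_form g F \<sigma> \<tau> l k e2 e3 \<longleftrightarrow> semi_null_basis g l k e2 e3 \<and>
     F l = (\<sigma>/2) *\<^sub>R e2 + (\<tau>/2) *\<^sub>R e3 \<and>
     F k = (-2) *\<^sub>R e2 \<and>
     F e2 = - l + (\<sigma>/4) *\<^sub>R k \<and>
     F e3 = (\<tau>/4) *\<^sub>R k"

end

theory Submission
  imports Defs
begin

text \<open>In a semi-null basis every vector v is recovered from its inner products,
  v = -(g v k/2) l - (g v l/2) k + (g v e2) e2 + (g v e3) e3. Skewness of F moves F across g,
  so the given values of F k and F e2 determine all inner products of F l and F e3 except
  d = g (F l) e3: one gets F l = (\<sigma>/2) e2 + d e3 and F e3 = (d/2) k, i.e. the normal form
  with 2d in place of \<tau>. The length of F l is then (\<sigma>^2 + 4 d^2)/4, so 2d = \<plusminus>\<tau>, and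
  replacing e3 by -e3 flips the sign of 2d.\<close>

lemma sym_bilinear_imp_bilinear:
  assumes "sym_bilinear g"
  shows "bilinear g"
proof -
  have "(\<lambda>y. g x y) = (\<lambda>y. g y x)" for x
    using assms unfolding sym_bilinear_def by auto
  then show ?thesis
    using assms unfolding sym_bilinear_def bilinear_def by metis
qed

lemmas bilinear_expand =
  bilinear_ladd bilinear_radd bilinear_lmul bilinear_rmul
  bilinear_lneg bilinear_rneg bilinear_lsub bilinear_rsub

lemma is_basis4_linear_image:
  assumes "linear f" and "bij f" and "is_basis4 a b c d"
  shows "is_basis4 (f a) (f b) (f c) (f d)"
proof -
  have inj: "inj_on f A" for A
    using \<open>bij f\<close> by (meson bij_betw_imp_inj_on inj_on_subset subset_UNIV)
  have image: "f ` {a, b, c, d} = {f a, f b, f c, f d}"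
    by simp
  from \<open>is_basis4 a b c d\<close> show ?thesis
    unfolding is_basis4_def image[symmetric]
    using card_image[OF inj] linear_independent_injective_image[OF \<open>linear f\<close> _ inj]
      linear_span_image[OF \<open>linear f\<close>] bij_is_surj[OF \<open>bij f\<close>]
    by metis
qed

text \<open>The frame with -e3 is again a basis because it is the image of the original one
  under the g-reflection in the unit vector e3.\<close>

definition reflection :: "('v::real_vector \<Rightarrow> 'v \<Rightarrow> real) \<Rightarrow> 'v \<Rightarrow> 'v \<Rightarrow> 'v" where
  "reflection g u v = v - (2 * g v u) *\<^sub>R u"

lemma linear_reflection:
  assumes "bilinear g"
  shows "linear (reflection g u)"
  by (rule linearI) (simp_all add: reflection_def bilinear_expand[OF assms] algebra_simps)

lemma reflection_self:
  assumes "g u u = 1"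
  shows "reflection g u u = - u"
  using assms by (simp add: reflection_def scaleR_2)

lemma reflection_orthogonal:
  assumes "g v u = 0"
  shows "reflection g u v = v"
  using assms by (simp add: reflection_def)

lemma reflection_reflection:
  assumes "bilinear g" and "g u u = 1"
  shows "reflection g u (reflection g u v) = v"
  using assms by (simp add: reflection_def bilinear_expand[OF assms(1)])

lemma bij_reflection:
  assumes "bilinear g" and "g u u = 1"
  shows "bij (reflection g u)"
  using reflection_reflection[OF assms] by (rule involuntory_imp_bij)

lemma semi_null_basis_gram:
  assumes "sym_bilinear g" and "semi_null_basis g l k e2 e3"
  shows "g l l = 0" "g l k = -2" "g l e2 = 0" "g l e3 = 0"
    "g k l = -2" "g k k = 0" "g k e2 = 0" "g k e3 = 0"
    "g e2 l = 0" "g e2 k = 0" "g e2 e2 = 1" "g e2 e3 = 0"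
    "g e3 l = 0" "g e3 k = 0" "g e3 e2 = 0" "g e3 e3 = 1"
  using assms unfolding sym_bilinear_def semi_null_basis_def by metis+

lemma semi_null_basis_neg_last:
  assumes "sym_bilinear g" and "semi_null_basis g l k e2 e3"
  shows "semi_null_basis g l k e2 (- e3)"
proof -
  have B: "bilinear g"
    using assms(1) by (rule sym_bilinear_imp_bilinear)
  note gram = semi_null_basis_gram[OF assms]
  have "is_basis4 (reflection g e3 l) (reflection g e3 k) (reflection g e3 e2) (reflection g e3 e3)"
    using assms(2) linear_reflection[OF B] bij_reflection[OF B gram(16)] is_basis4_linear_image
    unfolding semi_null_basis_def by blast
  then have "is_basis4 l k e2 (- e3)"
    by (simp add: reflection_orthogonal reflection_self gram)
  with assms(2) show ?thesis
    unfolding semi_null_basis_def by (simp add: bilinear_expand[OF B])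
qed

lemma span4_UNIV_obtain_coords:
  assumes "span {a, b, c, d} = UNIV"
  obtains p q r s where "v = p *\<^sub>R a + q *\<^sub>R b + r *\<^sub>R c + s *\<^sub>R d"
proof -
  have "v \<in> span {a, b, c, d}"
    using assms by simp
  then obtain p q r s where "v - p *\<^sub>R a - q *\<^sub>R b - r *\<^sub>R c = s *\<^sub>R d"
    by (auto simp: span_insert span_singleton)
  then show ?thesis
    using that[of p q r s] by (simp add: algebra_simps)
qed

lemma semi_null_expansion:
  assumes "sym_bilinear g" and "semi_null_basis g l k e2 e3"
  shows "v = (- g v k / 2) *\<^sub>R l + (- g v l / 2) *\<^sub>R k + g v e2 *\<^sub>R e2 + g v e3 *\<^sub>R e3"
proof -
  have B: "bilinear g"
    using assms(1) by (rule sym_bilinear_imp_bilinear)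
  obtain p q r s where v: "v = p *\<^sub>R l + q *\<^sub>R k + r *\<^sub>R e2 + s *\<^sub>R e3"
    using assms(2) span4_UNIV_obtain_coords unfolding semi_null_basis_def is_basis4_def by blast
  have "g v k = -2 * p" "g v l = -2 * q" "g v e2 = r" "g v e3 = s"
    unfolding v by (simp_all add: bilinear_expand[OF B] semi_null_basis_gram[OF assms])
  then show ?thesis
    using v by simp
qed

lemma semi_null_quadratic_form:
  assumes "sym_bilinear g" and "semi_null_basis g l k e2 e3"
  shows "g v v = - g v l * g v k + (g v e2)\<^sup>2 + (g v e3)\<^sup>2"
proof -
  have "g v v = g v ((- g v k / 2) *\<^sub>R l + (- g v l / 2) *\<^sub>R k + g v e2 *\<^sub>R e2 + g v e3 *\<^sub>R e3)"
    using semi_null_expansion[OF assms] by (rule arg_cong)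
  then show ?thesis
    by (simp add: bilinear_expand[OF sym_bilinear_imp_bilinear[OF assms(1)]] power2_eq_square)
qed

lemma skew_swap:
  assumes "sym_bilinear g" and "skew g F"
  shows "g (F x) y = - g x (F y)"
  using assms unfolding sym_bilinear_def skew_def by (metis minus_equation_iff)

lemma skew_apply_self:
  assumes "sym_bilinear g" and "skew g F"
  shows "g (F x) x = 0"
  using skew_swap[OF assms, of x x] assms(1) unfolding sym_bilinear_def by simp

lemma normal_form_of_generators:
  assumes S: "sym_bilinear g" and skew: "skew g F" and sn: "semi_null_basis g l k e2 e3"
    and Fk: "F k = (-2) *\<^sub>R e2" and Fe2: "F e2 = - l + (\<sigma>/4) *\<^sub>R k"
  shows "normal_form g F \<sigma> (2 * g (F l) e3) l k e2 e3"
proof -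
  define d where "d = g (F l) e3"
  have B: "bilinear g"
    using S by (rule sym_bilinear_imp_bilinear)
  note gram = semi_null_basis_gram[OF S sn]
  note swap = skew_swap[OF S skew]
  have expand: "v = (- g v k / 2) *\<^sub>R l + (- g v l / 2) *\<^sub>R k + g v e2 *\<^sub>R e2 + g v e3 *\<^sub>R e3" for v
    using S sn by (rule semi_null_expansion)
  have "g (F l) l = 0" "g (F l) k = 0" "g (F l) e2 = \<sigma>/2"
    using skew_apply_self[OF S skew] swap[of l k] swap[of l e2]
    by (simp_all add: Fk Fe2 bilinear_expand[OF B] gram)
  with expand[of "F l"] have Fl: "F l = (\<sigma>/2) *\<^sub>R e2 + d *\<^sub>R e3"
    unfolding d_def by simp
  have "g (F e3) l = - d" "g (F e3) k = 0" "g (F e3) e2 = 0" "g (F e3) e3 = 0"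
    using swap[of e3 l] swap[of e3 k] swap[of e3 e2] skew_apply_self[OF S skew]
    by (simp_all add: Fl Fk Fe2 bilinear_expand[OF B] gram)
  with expand[of "F e3"] have Fe3: "F e3 = (d/2) *\<^sub>R k"
    by simp
  show ?thesis
    unfolding normal_form_def d_def[symmetric] using sn Fl Fe3 Fk Fe2 by simp
qed

lemma normal_form_neg_last:
  assumes "sym_bilinear g" and "linear F" and "normal_form g F \<sigma> \<tau> l k e2 e3"
  shows "normal_form g F \<sigma> (- \<tau>) l k e2 (- e3)"
  using assms semi_null_basis_neg_last[OF assms(1)]
  unfolding normal_form_def by (simp add: linear_neg)

lemma normal_form_quadratic:
  assumes "sym_bilinear g" and "normal_form g F \<sigma> \<tau> l k e2 e3"
  shows "g (F l) (F l) = (\<sigma>\<^sup>2 + \<tau>\<^sup>2) / 4"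
proof -
  have sn: "semi_null_basis g l k e2 e3"
    using assms(2) unfolding normal_form_def by blast
  have coords: "g (F l) l = 0" "g (F l) e2 = \<sigma>/2" "g (F l) e3 = \<tau>/2"
    using assms(2) unfolding normal_form_def
    by (simp_all add: bilinear_expand[OF sym_bilinear_imp_bilinear[OF assms(1)]]
        semi_null_basis_gram[OF assms(1) sn])
  show ?thesis
    unfolding semi_null_quadratic_form[OF assms(1) sn, of "F l"] coords
    by (simp add: power_divide add_divide_distrib)
qed

theorem lemma3p1:
  fixes g :: "'v::real_vector \<Rightarrow> 'v \<Rightarrow> real" and F :: "'v \<Rightarrow> 'v"
    and \<sigma> \<tau> :: real and l k e2 e3 :: 'v
  assumes "lorentzian4 g"
    and "skew g F"
    and "semi_null_basis g l k e2 e3"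
    and "F k = (-2) *\<^sub>R e2"
    and "F e2 = - l + (\<sigma>/4) *\<^sub>R k"
    and "g (F l) (F l) = (\<sigma>^2 + \<tau>^2) / 4"
  shows "(normal_form g F \<sigma> \<tau> l k e2 e3 \<or> normal_form g F \<sigma> \<tau> l k e2 (- e3))
    \<and> (\<tau> = 0 \<longrightarrow> normal_form g F \<sigma> \<tau> l k e2 e3 \<and> normal_form g F \<sigma> \<tau> l k e2 (- e3))"
proof -
  define t where "t = 2 * g (F l) e3"
  have S: "sym_bilinear g"
    using assms(1) unfolding lorentzian4_def by blast
  have nf: "normal_form g F \<sigma> t l k e2 e3"
    unfolding t_def using S assms(2-5) by (rule normal_form_of_generators)
  moreover have "normal_form g F \<sigma> (- t) l k e2 (- e3)"
    using S assms(2) nf unfolding skew_def by (blast intro: normal_form_neg_last)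
  moreover have "t\<^sup>2 = \<tau>\<^sup>2"
    using normal_form_quadratic[OF S nf] assms(6) by simp
  then have "\<tau> = t \<or> \<tau> = - t"
    by (auto simp: power2_eq_iff)
  ultimately show ?thesis
    by auto
qed

end
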